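(* Let $D\ge 2$ be a square-free integer, let $K=\mathbb{Q}(\sqrt{D})$ with ring of integers $\mathbb{Z}_K$, and fix the real embedding of $K$ sending $\sqrt D$ to the positive square root of $D$. Let $u_f\in\mathbb{Z}_K^\times$ be the fundamental unit of $K$ that is $>1$ under this embedding, and let $u_D=u_f^2$ if $u_f$ has norm $-1$, and $u_D=u_f$ otherwise (so $u_D$ is the first positive power of $u_f$ of norm $1$). Then the following are equivalent for an integer $d$: (i) $d$ is a positive integer such that the square-free part of $(d-1)^2-4$ is equal to $D$; (ii) $\frac{d-1}{2}$ is the rational part of $u_D^r$ for some $r\in\mathbb{N}$.
   Context: The rational part of an element $a+b\sqrt D\in K$ with $a,b\in\mathbb{Q}$ is $a$. The square-free part of a nonzero integer $m$ is the unique square-free integer $s$ with $m=s\,n^2$ for some integer $n$. *)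

theory Defs
  imports Complex_Main "HOL-Computational_Algebra.Polynomial" "HOL-Computational_Algebra.Squarefree"
begin

definition qfield :: "int \<Rightarrow> real set" where
  "qfield D = {x. \<exists>a b :: rat. x = of_rat a + of_rat b * sqrt (of_int D)}"

definition rat_part :: "int \<Rightarrow> real \<Rightarrow> rat" where
  "rat_part D x = (THE a. \<exists>b :: rat. x = of_rat a + of_rat b * sqrt (of_int D))"

definition sqrt_coeff :: "int \<Rightarrow> real \<Rightarrow> rat" where
  "sqrt_coeff D x = (THE b. \<exists>a :: rat. x = of_rat a + of_rat b * sqrt (of_int D))"

definition qnorm :: "int \<Rightarrow> real \<Rightarrow> rat" where
  "qnorm D x = (rat_part D x)^2 - of_int D * (sqrt_coeff D x)^2"

definition ring_of_integers :: "int \<Rightarrow> real set" where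
  "ring_of_integers D = {x \<in> qfield D. algebraic_int x}"

definition qunits :: "int \<Rightarrow> real set" where
  "qunits D = {x \<in> ring_of_integers D. x \<noteq> 0 \<and> inverse x \<in> ring_of_integers D}"

definition is_fundamental_unit :: "int \<Rightarrow> real \<Rightarrow> bool" where
  "is_fundamental_unit D u \<longleftrightarrow> u \<in> qunits D \<and> u > 1 \<and>
     (\<forall>v \<in> qunits D. \<exists>n :: int. v = u powi n \<or> v = - (u powi n))"

definition sqfree_part :: "int \<Rightarrow> int" where
  "sqfree_part m = (THE s. squarefree s \<and> (\<exists>n :: int. m = s * n^2))"

end

theory Submission
  imports Defs
begin

text \<open>Put \<open>t = d - 1\<close>. If \<open>t\<^sup>2 - 4 = D n\<^sup>2\<close> with \<open>n \<noteq> 0\<close>, then \<open>v = (t + |n| \<surd>D)/2\<close> is a root of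
  \<open>X\<^sup>2 - t X + 1\<close>, hence a unit of norm 1 exceeding 1; it is therefore a positive power of \<open>u\<^sub>f\<close>,
  and since its norm is 1 even a power of \<open>u\<^sub>D\<close>. Conversely, \<open>u = u\<^sub>D\<^sup>r = a + b \<surd>D\<close> has norm 1,
  so \<open>2a = u + u\<^sup>-\<^sup>1 > 2\<close> and \<open>(2a)\<^sup>2 - 4 = D (2b)\<^sup>2\<close>, and squarefreeness of \<open>D\<close> makes \<open>2b\<close> an
  integer. The only arithmetic fact about units needed is that their norm is \<open>\<plusminus>1\<close>, i.e. that
  algebraic integers of \<open>K\<close> have integral norm; this follows because the powers of an algebraic
  integer have bounded denominators.\<close>

lemma quotient_of_denom_power_dvd:
  assumes "quotient_of q = (u, v)" and "of_int C * q ^ k \<in> \<int>"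
  shows "v ^ k dvd C"
proof -
  have v: "v > 0" "coprime u v" "q = of_int u / of_int v"
    using assms(1) quotient_of_denom_pos quotient_of_coprime quotient_of_div by blast+
  obtain m where "of_int C * q ^ k = (of_int m :: rat)"
    using assms(2) by (auto elim: Ints_cases)
  hence "C * u ^ k = m * v ^ k"
    using v by (simp add: power_divide field_simps flip: of_int_power of_int_mult)
  hence "v ^ k dvd C * u ^ k" by simp
  thus ?thesis using v(2) by (simp add: coprime_commute coprime_dvd_mult_left_iff)
qed

lemma Ints_if_bounded_power_denominators:
  fixes q :: rat and C :: int
  assumes "C > 0" and "\<And>k. of_int C * q ^ k \<in> \<int>"
  shows "q \<in> \<int>"
proof -
  obtain u v where q: "quotient_of q = (u, v)" by (cases "quotient_of q")
  have dvd: "v ^ k dvd C" for k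
    using quotient_of_denom_power_dvd[OF q assms(2)] .
  have "v = 1"
  proof (rule ccontr)
    assume "v \<noteq> 1"
    hence "2 ^ nat C \<le> v ^ nat C" using q quotient_of_denom_pos by (intro power_mono) force+
    also have "\<dots> \<le> C" using dvd assms(1) by (rule zdvd_imp_le)
    finally have "int (2 ^ nat C) \<le> C" by simp
    moreover have "nat C < 2 ^ nat C" by (rule less_exp)
    ultimately show False by linarith
  qed
  thus ?thesis using quotient_of_div[OF q] by simp
qed

lemma Ints_if_squarefree_times_square:
  fixes q :: rat
  assumes "squarefree D" and "of_int D * q\<^sup>2 \<in> \<int>"
  shows "q \<in> \<int>"
proof -
  obtain u v where q: "quotient_of q = (u, v)" by (cases "quotient_of q")
  have "v\<^sup>2 dvd D" using quotient_of_denom_power_dvd[OF q assms(2)] .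
  hence "v dvd 1" using assms(1) squarefreeD by blast
  hence "v = 1" using q quotient_of_denom_pos by fastforce
  thus ?thesis using quotient_of_div[OF q] by simp
qed

lemma sqfree_part_eqI:
  fixes D m n :: int
  assumes "squarefree D" and "m = D * n ^ 2" and "m \<noteq> 0"
  shows "sqfree_part m = D"
  unfolding sqfree_part_def
proof (rule the_equality)
  show "squarefree D \<and> (\<exists>n. m = D * n ^ 2)" using assms by blast
next
  fix s assume "squarefree s \<and> (\<exists>k. m = s * k ^ 2)"
  then obtain k where s: "squarefree s" "m = s * k ^ 2" by blast
  have nk: "n \<noteq> 0" "k \<noteq> 0" using assms(2,3) s(2) by auto
  define q :: rat where "q = of_int k / of_int n"
  have "of_int s * q ^ 2 = of_int D" and "of_int D * (1 / q) ^ 2 = of_int s"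
    using assms(2) s(2) nk by (simp_all add: q_def power_divide field_simps flip: of_int_power of_int_mult)
  hence "q \<in> \<int>" "1 / q \<in> \<int>"
    using Ints_if_squarefree_times_square s(1) assms(1) by (metis Ints_of_int)+
  then obtain a b where "q = of_int a" "1 / q = of_int b" by (metis Ints_cases)
  moreover have "q \<noteq> 0" using nk by (simp add: q_def)
  ultimately have "a * b = 1" by (metis of_int_eq_1_iff of_int_mult right_inverse divide_inverse mult_1)
  hence "q ^ 2 = 1" using \<open>q = of_int a\<close> zmult_eq_1_iff by auto
  thus "s = D" using \<open>of_int s * q ^ 2 = of_int D\<close> by simp
qed

lemma sqfree_part_decompose:
  fixes m :: int
  assumes "m \<noteq> 0"
  shows "\<exists>n. m = sqfree_part m * n ^ 2"
  using squarefree_decompose[of m] sqfree_part_eqI[OF squarefree_squarefree_part _ assms] by metis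

lemma algebraic_int_power_in_int_module:
  fixes x :: "'a :: comm_ring_1"
  assumes p: "lead_coeff p = 1" "\<forall>i. coeff p i \<in> \<int>" "poly p x = 0"
    and S: "0 \<in> S" "\<And>y z. y \<in> S \<Longrightarrow> z \<in> S \<Longrightarrow> y + z \<in> S" "\<And>c y. y \<in> S \<Longrightarrow> of_int c * y \<in> S"
    and low_powers: "\<And>i. i < degree p \<Longrightarrow> x ^ i \<in> S"
  shows "x ^ k \<in> S"
proof (induction k rule: less_induct)
  case (less k)
  define n where "n = degree p"
  show ?case
  proof (cases "k < n")
    case True
    thus ?thesis using low_powers by (simp add: n_def)
  next
    case False
    have "\<forall>i. \<exists>c. coeff p i = - of_int c" using p(2) by (metis Ints_cases add.inverse_inverse of_int_minus)
    then obtain c where c: "\<And>i. coeff p i = - of_int (c i)" by metis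
    have "0 = poly p x" using p(3) by simp
    also have "\<dots> = (\<Sum>i<n. coeff p i * x ^ i) + x ^ n"
      using p(1) by (simp add: poly_altdef n_def lessThan_Suc_atMost[symmetric])
    finally have "x ^ n = - (\<Sum>i<n. coeff p i * x ^ i)" by (simp add: eq_neg_iff_add_eq_0 add.commute)
    moreover have "x ^ k = x ^ (k - n) * x ^ n"
      using False by (simp flip: power_add)
    ultimately have "x ^ k = (\<Sum>i<n. of_int (c i) * x ^ (k - n + i))"
      by (simp add: c power_add sum_distrib_left sum_negf mult.left_commute)
    moreover have "(\<Sum>i<m. of_int (c i) * x ^ (k - n + i)) \<in> S" if "m \<le> n" for m
      using that by (induction m) (use False in \<open>auto intro!: S less.IH\<close>)
    ultimately show ?thesis by simp
  qed
qed

definition qelem :: "int \<Rightarrow> rat \<Rightarrow> rat \<Rightarrow> real" where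
  "qelem D a b = of_rat a + of_rat b * sqrt (of_int D)"

definition zsqrt :: "int \<Rightarrow> real set" where
  "zsqrt D = {qelem D (of_int A) (of_int B) | A B. True}"

lemma qfield_iff: "x \<in> qfield D \<longleftrightarrow> (\<exists>a b. x = qelem D a b)"
  by (simp add: qfield_def qelem_def)

lemma qelem_in_qfield [simp]: "qelem D a b \<in> qfield D"
  using qfield_iff by blast

lemma of_rat_eq_qelem: "of_rat c = qelem D c 0"
  by (simp add: qelem_def)

lemma of_int_in_qfield [simp]: "of_int c \<in> qfield D"
  by (metis qelem_in_qfield of_rat_eq_qelem of_rat_of_int_eq)

lemma qelem_add: "qelem D a b + qelem D c e = qelem D (a + c) (b + e)"
  by (simp add: qelem_def of_rat_add algebra_simps)

lemma of_int_diff_qelem: "of_int t - qelem D a b = qelem D (of_int t - a) (- b)"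
  by (simp add: qelem_def of_rat_diff of_rat_minus)

lemma qelem_mult:
  assumes "0 \<le> D"
  shows "qelem D a b * qelem D c e = qelem D (a * c + of_int D * b * e) (a * e + b * c)"
proof -
  have "sqrt (of_int D) * sqrt (of_int D) = real_of_int D" using assms by simp
  thus ?thesis by (simp add: qelem_def of_rat_add of_rat_mult algebra_simps)
qed

lemma qelem_quadratic_eq:
  assumes "0 \<le> D"
  shows "(qelem D a b)\<^sup>2 - 2 * of_rat a * qelem D a b + of_rat (a\<^sup>2 - of_int D * b\<^sup>2) = 0"
proof -
  have "(sqrt (of_int D))\<^sup>2 = real_of_int D" using assms by simp
  thus ?thesis
    by (simp add: qelem_def of_rat_diff of_rat_mult of_rat_power power2_sum power_mult_distrib
        power2_eq_square algebra_simps)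
qed

lemma zsqrt_iff: "z \<in> zsqrt D \<longleftrightarrow> (\<exists>A B. z = qelem D (of_int A) (of_int B))"
  by (simp add: zsqrt_def)

lemma zsqrt_of_int: "of_int c \<in> zsqrt D"
  unfolding zsqrt_iff by (metis of_rat_eq_qelem of_rat_of_int_eq of_int_0)

lemma zsqrt_add: "y \<in> zsqrt D \<Longrightarrow> z \<in> zsqrt D \<Longrightarrow> y + z \<in> zsqrt D"
  unfolding zsqrt_iff by (metis qelem_add of_int_add)

lemma zsqrt_mult:
  assumes "0 \<le> D" "y \<in> zsqrt D" "z \<in> zsqrt D"
  shows "y * z \<in> zsqrt D"
proof -
  obtain A B C E where "y = qelem D (of_int A) (of_int B)" "z = qelem D (of_int C) (of_int E)"
    using assms(2,3) by (auto simp: zsqrt_iff)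
  hence "y * z = qelem D (of_int (A * C + D * B * E)) (of_int (A * E + B * C))"
    using assms(1) by (simp add: qelem_mult)
  thus ?thesis unfolding zsqrt_iff by blast
qed

lemma zsqrt_power: "0 \<le> D \<Longrightarrow> z \<in> zsqrt D \<Longrightarrow> z ^ k \<in> zsqrt D"
  by (induction k) (auto simp: zsqrt_mult intro: zsqrt_of_int[of 1, simplified])

lemma qfield_common_denominator:
  assumes "x \<in> qfield D"
  obtains L :: int where "L > 0" "of_int L * x \<in> zsqrt D"
proof -
  obtain a b where x: "x = qelem D a b" using assms qfield_iff by blast
  obtain u v u' v' where q: "quotient_of a = (u, v)" "quotient_of b = (u', v')"
    by (metis surj_pair)
  have v: "v > 0" "v' > 0" "a = of_int u / of_int v" "b = of_int u' / of_int v'"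
    using q quotient_of_denom_pos quotient_of_div by blast+
  have "of_int (v * v') * x = qelem D (of_int (u * v')) (of_int (u' * v))"
    using v(1,2) unfolding x v(3,4) by (simp add: qelem_def of_rat_divide of_rat_mult field_simps)
  hence "of_int (v * v') * x \<in> zsqrt D" unfolding zsqrt_iff by blast
  thus ?thesis using that[of "v * v'"] v(1,2) by simp
qed

lemma quadratic_unit_in_qunits:
  assumes "x \<in> qfield D" and "x\<^sup>2 - of_int t * x + 1 = 0"
  shows "x \<in> qunits D"
proof -
  define p :: "real poly" where "p = [:1, - of_int t, 1:]"
  have p: "lead_coeff p = 1" "\<forall>i. coeff p i \<in> \<int>" "coeff p 0 = 1" "poly p x = 0"
    using assms(2) by (auto simp: p_def coeff_pCons power2_eq_square algebra_simps split: nat.splits)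
  have "x \<noteq> 0" using assms(2) by auto
  hence "inverse x = of_int t - x"
    using assms(2) by (simp add: field_simps power2_eq_square)
  hence "inverse x \<in> qfield D"
    using assms(1) of_int_diff_qelem by (metis qfield_iff)
  moreover have "algebraic_int x" "algebraic_int (inverse x)"
    using p by (auto intro: algebraic_int.intros algebraic_int_inverse)
  ultimately show ?thesis
    using assms(1) \<open>x \<noteq> 0\<close> by (simp add: qunits_def ring_of_integers_def)
qed

lemma fundamental_unit_power:
  assumes "is_fundamental_unit D u" and "v \<in> qunits D" and "v > 1"
  obtains k where "k > 0" and "v = u ^ k"
proof -
  have u: "u > 1" using assms(1) by (simp add: is_fundamental_unit_def)
  obtain n where "v = u powi n \<or> v = - (u powi n)"
    using assms(1,2) by (auto simp: is_fundamental_unit_def)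
  moreover have "u powi n > 0" using u by simp
  ultimately have v: "v = u powi n" using assms(3) by auto
  have "n > 0"
  proof (rule ccontr)
    assume "\<not> n > 0"
    hence "u powi n \<le> u powi 0" using u by (intro power_int_increasing) auto
    thus False using v assms(3) by simp
  qed
  thus ?thesis using that[of "nat n"] v by (simp add: power_int_def)
qed

locale real_quadratic_field =
  fixes D :: int
  assumes D_ge_2: "D \<ge> 2" and squarefree_D: "squarefree D"
begin

lemma D_nonneg: "0 \<le> D"
  using D_ge_2 by simp

lemma sqrt_D_not_Rats: "sqrt (of_int D) \<notin> \<rat>"
proof
  assume "sqrt (of_int D) \<in> \<rat>"
  then obtain q where q: "sqrt (of_int D) = of_rat q" by (auto elim: Rats_cases)
  hence q2: "q\<^sup>2 = of_int D"
    using D_nonneg by (metis of_rat_eq_iff of_rat_of_int_eq of_rat_power of_int_nonneg real_sqrt_pow2)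
  hence "q \<in> \<int>" using Ints_if_squarefree_times_square[of 1 q] by simp
  then obtain m where "q = of_int m" by (rule Ints_cases)
  hence "m\<^sup>2 = D" using q2 by (metis of_int_eq_iff of_int_power)
  hence "m dvd 1" by (intro squarefreeD[OF squarefree_D]) simp
  hence "m\<^sup>2 = 1" using zdvd1_eq by (metis power2_abs one_power2)
  thus False using \<open>m\<^sup>2 = D\<close> D_ge_2 by simp
qed

lemma qelem_eq_iff: "qelem D a b = qelem D c e \<longleftrightarrow> a = c \<and> b = e"
proof
  assume eq: "qelem D a b = qelem D c e"
  show "a = c \<and> b = e"
  proof (cases "b = e")
    case True thus ?thesis using eq by (simp add: qelem_def)
  next
    case False
    hence "sqrt (of_int D) = of_rat ((c - a) / (b - e))"
      using eq by (simp add: qelem_def of_rat_diff of_rat_divide field_simps)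
    thus ?thesis using sqrt_D_not_Rats by simp
  qed
qed simp

lemma rat_part_qelem [simp]: "rat_part D (qelem D a b) = a"
  and sqrt_coeff_qelem [simp]: "sqrt_coeff D (qelem D a b) = b"
  unfolding rat_part_def sqrt_coeff_def using qelem_eq_iff
  by (auto simp flip: qelem_def intro!: the_equality)

lemma qnorm_qelem [simp]: "qnorm D (qelem D a b) = a\<^sup>2 - of_int D * b\<^sup>2"
  by (simp add: qnorm_def)

lemma qfield_mult: "x \<in> qfield D \<Longrightarrow> y \<in> qfield D \<Longrightarrow> x * y \<in> qfield D"
  unfolding qfield_iff by (metis qelem_mult[OF D_nonneg])

lemma qnorm_mult:
  assumes "x \<in> qfield D" "y \<in> qfield D"
  shows "qnorm D (x * y) = qnorm D x * qnorm D y"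
  using assms by (auto simp: qfield_iff qelem_mult[OF D_nonneg] power2_eq_square algebra_simps)

lemma qfield_power: "x \<in> qfield D \<Longrightarrow> x ^ k \<in> qfield D"
  by (induction k) (auto simp: qfield_mult of_int_in_qfield[of 1, simplified])

lemma qnorm_power: "x \<in> qfield D \<Longrightarrow> qnorm D (x ^ k) = qnorm D x ^ k"
proof (induction k)
  case 0
  show ?case using qnorm_qelem[of 1 0] by (simp flip: of_rat_eq_qelem)
qed (simp add: qnorm_mult qfield_power)

lemma qnorm_of_int: "qnorm D (of_int c) = of_int c ^ 2"
  using qnorm_qelem[of "of_int c" 0] by (simp flip: of_rat_eq_qelem)

lemma qnorm_zsqrt_Ints: "z \<in> zsqrt D \<Longrightarrow> qnorm D z \<in> \<int>"
  by (auto simp: zsqrt_iff simp flip: of_int_power of_int_mult of_int_diff)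

lemma algebraic_int_qnorm_Ints:
  assumes "x \<in> qfield D" and "algebraic_int x"
  shows "qnorm D x \<in> \<int>"
proof -
  obtain p where p: "lead_coeff p = 1" "\<forall>i. coeff p i \<in> \<int>" "poly p x = 0"
    using assms(2) by (auto elim: algebraic_int.cases)
  obtain L where L: "L > 0" "of_int L * x \<in> zsqrt D"
    using qfield_common_denominator[OF assms(1)] .
  define M where "M = L ^ degree p"
  \<comment> \<open>every power of \<open>x\<close> lies in \<open>M\<^sup>-\<^sup>1 \<int>[\<surd>D]\<close>, so \<open>M\<^sup>2 N(x)\<^sup>k\<close> is an integer for all \<open>k\<close>\<close>
  have "x ^ k \<in> {z. of_int M * z \<in> zsqrt D}" for k
  proof (rule algebraic_int_power_in_int_module[OF p])
    fix i assume "i < degree p"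
    hence "of_int M * x ^ i = of_int (L ^ (degree p - i)) * (of_int L * x) ^ i"
      by (simp add: M_def power_mult_distrib flip: power_add)
    thus "x ^ i \<in> {z. of_int M * z \<in> zsqrt D}"
      using L(2) by (simp add: zsqrt_mult zsqrt_power zsqrt_of_int D_nonneg)
  next
    fix c y assume "y \<in> {z. of_int M * z \<in> zsqrt D}"
    thus "of_int c * y \<in> {z. of_int M * z \<in> zsqrt D}"
      by (simp add: mult.left_commute[of "of_int M"] zsqrt_mult zsqrt_of_int D_nonneg)
  qed (auto simp: distrib_left zsqrt_add zsqrt_of_int[of 0, simplified])
  hence "qnorm D (of_int M * x ^ k) \<in> \<int>" for k
    using qnorm_zsqrt_Ints by blast
  moreover have "qnorm D (of_int M * x ^ k) = of_int (M\<^sup>2) * qnorm D x ^ k" for k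
    using assms(1) by (simp add: qnorm_mult qnorm_power qnorm_of_int qfield_power)
  moreover have "M\<^sup>2 > 0" using L(1) by (simp add: M_def)
  ultimately show ?thesis using Ints_if_bounded_power_denominators by metis
qed

lemma qunits_qnorm:
  assumes "u \<in> qunits D"
  shows "qnorm D u = 1 \<or> qnorm D u = -1"
proof -
  have u: "u \<in> qfield D" "algebraic_int u" "u \<noteq> 0" "inverse u \<in> qfield D" "algebraic_int (inverse u)"
    using assms by (auto simp: qunits_def ring_of_integers_def)
  obtain i j where ij: "qnorm D u = of_int i" "qnorm D (inverse u) = of_int j"
    using algebraic_int_qnorm_Ints u by (metis Ints_cases)
  have "qnorm D u * qnorm D (inverse u) = 1"
    using qnorm_mult[OF u(1,4)] u(3) qnorm_of_int[of 1] by simp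
  hence "i * j = 1" using ij by (metis of_int_eq_1_iff of_int_mult)
  thus ?thesis using ij(1) zmult_eq_1_iff by auto
qed

lemma norm_one_power_eq_power:
  assumes "u \<in> qfield D" and "k > 0" and "qnorm D (u ^ k) = 1"
  obtains r where "r > 0" and "u ^ k = (if qnorm D u = -1 then u\<^sup>2 else u) ^ r"
proof (cases "qnorm D u = -1")
  case True
  hence "(-1) ^ k = (1 :: rat)" using assms by (simp add: qnorm_power)
  hence "even k" by (metis neg_one_odd_power one_neq_neg_one)
  then obtain r where "k = 2 * r" by blast
  thus ?thesis using that[of r] True assms(2) by (simp add: power_mult)
next
  case False
  thus ?thesis using that[of k] assms(2) by simp
qed

lemma pell_solution_unit:
  assumes "t \<ge> 0" and "t\<^sup>2 - 4 = D * n\<^sup>2" and "n \<noteq> 0"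
  defines "v \<equiv> qelem D (of_int t / 2) (of_int \<bar>n\<bar> / 2)"
  shows "v \<in> qunits D" and "v > 1" and "qnorm D v = 1" and "rat_part D v = of_int t / 2"
proof -
  have "t\<^sup>2 - D * \<bar>n\<bar>\<^sup>2 = 4" using assms(2) by simp
  hence "rat_of_int (t\<^sup>2 - D * \<bar>n\<bar>\<^sup>2) = 4" by (simp only: of_int_numeral)
  hence norm: "(of_int t / 2)\<^sup>2 - of_int D * (of_int \<bar>n\<bar> / 2)\<^sup>2 = (1 :: rat)"
    by (simp add: power_divide field_simps)
  thus "qnorm D v = 1" by (simp add: v_def)
  show "rat_part D v = of_int t / 2" by (simp add: v_def)
  have "v\<^sup>2 - of_int t * v + 1 = 0"
    using qelem_quadratic_eq[OF D_nonneg, of "of_int t / 2" "of_int \<bar>n\<bar> / 2"] norm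
    by (simp add: v_def of_rat_divide)
  thus "v \<in> qunits D" by (intro quadratic_unit_in_qunits[of _ D t]) (simp_all add: v_def)
  have "0 < D * n\<^sup>2" using D_ge_2 assms(3) by simp
  hence "2\<^sup>2 < t\<^sup>2" using assms(2) by simp
  hence "2 < t" using assms(1) by (rule power_less_imp_less_base)
  hence "1 < real_of_rat (of_int t / 2)" by (simp add: of_rat_divide)
  moreover have "0 \<le> real_of_rat (of_int \<bar>n\<bar> / 2) * sqrt (of_int D)" using D_nonneg by simp
  ultimately show "v > 1" unfolding v_def qelem_def by linarith
qed

lemma sqfree_part_trace_norm_one:
  assumes "u \<in> qfield D" and "qnorm D u = 1" and "u > 1" and "of_int t / 2 = rat_part D u"
  shows "t > 2" and "t\<^sup>2 - 4 \<noteq> 0" and "sqfree_part (t\<^sup>2 - 4) = D"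
proof -
  obtain a b where u: "u = qelem D a b" using assms(1) qfield_iff by blast
  have a: "a = of_int t / 2" and norm: "a\<^sup>2 - of_int D * b\<^sup>2 = 1"
    using assms(2,4) by (simp_all add: u)
  have "u\<^sup>2 - of_int t * u + 1 = 0"
    using qelem_quadratic_eq[OF D_nonneg, of a b] norm by (simp add: u a of_rat_divide)
  moreover have "0 < (u - 1)\<^sup>2" using assms(3) by simp
  hence "2 * u < u\<^sup>2 + 1" by (simp add: power2_diff)
  ultimately have "2 * u < of_int t * u" by simp
  thus "t > 2" using assms(3) by simp
  have "of_int t = 2 * a" using a by simp
  hence "of_int (t\<^sup>2 - 4) = 4 * (a\<^sup>2 - 1)"
    by (simp add: power2_eq_square algebra_simps)
  also have "\<dots> = of_int D * (2 * b)\<^sup>2"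
    using norm by (simp add: power_mult_distrib)
  finally have "of_int D * (2 * b)\<^sup>2 = of_int (t\<^sup>2 - 4)" ..
  hence "2 * b \<in> \<int>" by (metis Ints_if_squarefree_times_square[OF squarefree_D] Ints_of_int)
  then obtain n where "2 * b = of_int n" by (rule Ints_cases)
  hence n: "t\<^sup>2 - 4 = D * n\<^sup>2"
    using \<open>of_int D * (2 * b)\<^sup>2 = _\<close> by (metis of_int_eq_iff of_int_mult of_int_power)
  have "2\<^sup>2 < t\<^sup>2" using \<open>t > 2\<close> by (intro power_strict_mono) auto
  thus "t\<^sup>2 - 4 \<noteq> 0" by simp
  with n show "sqfree_part (t\<^sup>2 - 4) = D" using squarefree_D by (intro sqfree_part_eqI)
qed

end

theorem lemma2p1:
  fixes D :: int and u_f :: real and d :: int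
  assumes "D \<ge> 2" and "squarefree D"
    and "is_fundamental_unit D u_f"
  defines "u_D \<equiv> (if qnorm D u_f = -1 then u_f ^ 2 else u_f)"
  shows "(d > 0 \<and> (d - 1)^2 - 4 \<noteq> 0 \<and> sqfree_part ((d - 1)^2 - 4) = D) \<longleftrightarrow>
         (\<exists>r :: nat. r \<ge> 1 \<and> of_int (d - 1) / 2 = rat_part D (u_D ^ r))"
proof -
  interpret real_quadratic_field D using assms(1,2) by unfold_locales
  have u_f: "u_f \<in> qunits D" "u_f > 1" "u_f \<in> qfield D"
    using assms(3) by (simp_all add: is_fundamental_unit_def qunits_def ring_of_integers_def)
  have u_D: "u_D \<in> qfield D" "qnorm D u_D = 1" "u_D > 1"
    using qunits_qnorm[OF u_f(1)] u_f(2,3) by (auto simp: u_D_def qfield_power qnorm_power)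
  show ?thesis
  proof
    assume "d > 0 \<and> (d - 1)^2 - 4 \<noteq> 0 \<and> sqfree_part ((d - 1)^2 - 4) = D"
    then obtain n where "d > 0" "(d - 1)\<^sup>2 - 4 = D * n\<^sup>2" "n \<noteq> 0"
      using sqfree_part_decompose by (metis mult_zero_left zero_power2 mult_zero_right)
    then obtain v where v: "v \<in> qunits D" "v > 1" "qnorm D v = 1" "rat_part D v = of_int (d - 1) / 2"
      using pell_solution_unit[of "d - 1" n] by fastforce
    obtain k where "k > 0" "v = u_f ^ k" using fundamental_unit_power[OF assms(3) v(1,2)] .
    then obtain r where "r > 0" "v = u_D ^ r"
      using norm_one_power_eq_power[OF u_f(3)] v(3) unfolding u_D_def by metis
    thus "\<exists>r :: nat. r \<ge> 1 \<and> of_int (d - 1) / 2 = rat_part D (u_D ^ r)"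
      using v(4) by (intro exI[of _ r]) auto
  next
    assume "\<exists>r :: nat. r \<ge> 1 \<and> of_int (d - 1) / 2 = rat_part D (u_D ^ r)"
    then obtain r :: nat where "r \<ge> 1" "of_int (d - 1) / 2 = rat_part D (u_D ^ r)" by blast
    moreover have "u_D ^ r \<in> qfield D" "qnorm D (u_D ^ r) = 1" "u_D ^ r > 1"
      using u_D \<open>r \<ge> 1\<close> by (simp_all add: qfield_power qnorm_power)
    ultimately show "d > 0 \<and> (d - 1)^2 - 4 \<noteq> 0 \<and> sqfree_part ((d - 1)^2 - 4) = D"
      using sqfree_part_trace_norm_one[of "u_D ^ r" "d - 1"] by auto
  qed
qed

end
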